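(* Consider $n$ agents and $m$ indivisible items where each agent has a binary submodular valuation (notation as in the context). For any $\chi,\chi'\in\mathcal{SS}$ with profiles $(h_1,\dots,h_n)$ and $(h'_1,\dots,h'_n)$, we have $|h_i-h'_i|\le1$ for every agent $i\in[n]$; i.e. the Chebyshev distance between the profiles is at most $1$.
   Context: Agents $[n]$, items $[m]$. Each agent $i$ has a valuation $v_i:2^{[m]}\to\mathbb{R}_{\ge0}$ with $v_i(\emptyset)=0$ that is binary submodular: the marginal gain $\Delta_i(S;o)=v_i(S\cup\{o\})-v_i(S)$ lies in $\{0,1\}$ for all $S$ and $o$, and $\Delta_i(T;o)\le\Delta_i(S;o)$ whenever $S\subseteq T\subseteq[m]$, $o\notin T$. An allocation $\chi=(\chi_1,\dots,\chi_n)$ is a tuple of pairwise disjoint subsets of $[m]$; bundle $\chi_i$ is clean if $\Delta_i(\chi_i\setminus\{o\};o)=1$ for every $o\in\chi_i$ (equivalently $v_i(\chi_i)=|\chi_i|$); $\chi$ is clean if all bundles are clean; $\chi$ is max-USW if it maximizes $\sum_i v_i(\chi_i)$ among all allocations. The profile is $(h_1,\dots,h_n)$ with $h_i=|\chi_i|$. A criterion is a function $f$ from profiles to $\mathbb{R}$ (lower is better), symmetric if invariant under permuting coordinates; $f$ is strongly Pigou–Dalton if $f(\mathbf{q})<f(\mathbf{p})$ whenever there are $j,k$ with $p_j<p_k$, $q_j,q_k\in(p_j,p_k)$ and $q_i=p_i$ for $i\notin\{j,k\}$. $\mathcal{SS}$ denotes the set of clean max-USW allocations that minimize $f$ of the profile,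 among all clean max-USW allocations, for every symmetric strongly Pigou–Dalton criterion $f$. *)

theory Defs
  imports Complex_Main "HOL-Library.Multiset"
begin

text \<open>Agents are 0,...,n-1; items are 0,...,m-1. A valuation profile is
  v :: nat => nat set => real, where v i is the valuation of agent i on subsets of items.\<close>

definition marg :: "(nat set \<Rightarrow> real) \<Rightarrow> nat set \<Rightarrow> nat \<Rightarrow> real" where
  "marg vi S x = vi (S \<union> {x}) - vi S"

definition binary_submodular :: "nat \<Rightarrow> (nat set \<Rightarrow> real) \<Rightarrow> bool" where
  "binary_submodular m vi \<longleftrightarrow>
     vi {} = 0 \<and>
     (\<forall>S. S \<subseteq> {..<m} \<longrightarrow> vi S \<ge> 0) \<and>
     (\<forall>S x. S \<subseteq> {..<m} \<and> x \<in> {..<m} \<longrightarrow> marg vi S x \<in> {0, 1}) \<and>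
     (\<forall>S T x. S \<subseteq> T \<and> T \<subseteq> {..<m} \<and> x \<in> {..<m} \<and> x \<notin> T
        \<longrightarrow> marg vi T x \<le> marg vi S x)"

definition allocation :: "nat \<Rightarrow> nat \<Rightarrow> (nat \<Rightarrow> nat set) \<Rightarrow> bool" where
  "allocation n m \<chi> \<longleftrightarrow>
     (\<forall>i<n. \<chi> i \<subseteq> {..<m}) \<and>
     (\<forall>i<n. \<forall>j<n. i \<noteq> j \<longrightarrow> \<chi> i \<inter> \<chi> j = {})"

definition clean_bundle :: "(nat set \<Rightarrow> real) \<Rightarrow> nat set \<Rightarrow> bool" where
  "clean_bundle vi B \<longleftrightarrow> (\<forall>x\<in>B. marg vi (B - {x}) x = 1)"

definition clean :: "nat \<Rightarrow> (nat \<Rightarrow> nat set \<Rightarrow> real) \<Rightarrow> (nat \<Rightarrow> nat set) \<Rightarrow> bool" where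
  "clean n v \<chi> \<longleftrightarrow> (\<forall>i<n. clean_bundle (v i) (\<chi> i))"

definition usw :: "nat \<Rightarrow> (nat \<Rightarrow> nat set \<Rightarrow> real) \<Rightarrow> (nat \<Rightarrow> nat set) \<Rightarrow> real" where
  "usw n v \<chi> = (\<Sum>i<n. v i (\<chi> i))"

definition max_usw :: "nat \<Rightarrow> nat \<Rightarrow> (nat \<Rightarrow> nat set \<Rightarrow> real) \<Rightarrow> (nat \<Rightarrow> nat set) \<Rightarrow> bool" where
  "max_usw n m v \<chi> \<longleftrightarrow> allocation n m \<chi> \<and>
     (\<forall>\<chi>'. allocation n m \<chi>' \<longrightarrow> usw n v \<chi>' \<le> usw n v \<chi>)"

definition profile :: "nat \<Rightarrow> (nat \<Rightarrow> nat set) \<Rightarrow> nat list" where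
  "profile n \<chi> = map (\<lambda>i. card (\<chi> i)) [0..<n]"

text \<open>Criteria: functions from profiles (lists of length n) to reals, lower is better.\<close>
definition symmetric_crit :: "nat \<Rightarrow> (nat list \<Rightarrow> real) \<Rightarrow> bool" where
  "symmetric_crit n f \<longleftrightarrow>
     (\<forall>p q. length p = n \<and> length q = n \<and> mset p = mset q \<longrightarrow> f p = f q)"

definition strongly_PD :: "nat \<Rightarrow> (nat list \<Rightarrow> real) \<Rightarrow> bool" where
  "strongly_PD n f \<longleftrightarrow>
     (\<forall>p q j k. length p = n \<and> length q = n \<and> j < n \<and> k < n \<and>
        p ! j < p ! k \<and>
        p ! j < q ! j \<and> q ! j < p ! k \<and>
        p ! j < q ! k \<and> q ! k < p ! k \<and>
        (\<forall>i<n. i \<noteq> j \<and> i \<noteq> k \<longrightarrow> q ! i = p ! i)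
        \<longrightarrow> f q < f p)"

definition clean_max_usw :: "nat \<Rightarrow> nat \<Rightarrow> (nat \<Rightarrow> nat set \<Rightarrow> real) \<Rightarrow> (nat \<Rightarrow> nat set) \<Rightarrow> bool" where
  "clean_max_usw n m v \<chi> \<longleftrightarrow> max_usw n m v \<chi> \<and> clean n v \<chi>"

definition SS :: "nat \<Rightarrow> nat \<Rightarrow> (nat \<Rightarrow> nat set \<Rightarrow> real) \<Rightarrow> (nat \<Rightarrow> nat set) set" where
  "SS n m v = {\<chi>. clean_max_usw n m v \<chi> \<and>
     (\<forall>f. symmetric_crit n f \<and> strongly_PD n f \<longrightarrow>
        (\<forall>\<chi>'. clean_max_usw n m v \<chi>' \<longrightarrow> f (profile n \<chi>) \<le> f (profile n \<chi>')))}"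

end

theory Submission
  imports Defs
begin

text \<open>Clean bundles of a binary submodular valuation are the independent sets of a matroid. Hence a
  clean max-USW allocation X in which agent k has fewer items than in another one Y can give k an
  item of Y k; this item must be taken from some agent j, and iterating from j yields an agent i
  with more items in X than in Y such that moving one unit of bundle size from i to k stays within
  the profiles of clean max-USW allocations.

  An allocation in SS minimizes the symmetric, strongly Pigou-Dalton criterion
  sum of 2 to the power h_i, so no such exchange moves a unit from a bundle to one at least two
  smaller, and an exchange between bundles whose sizes differ by one swaps two coordinates of the
  profile and therefore stays in SS. For two profiles h, h' of SS with h_i at least h'_i + 2 and of
  minimal l1 distance, alternating exchanges between h and h' then yield agents with strictly
  decreasing h-values, which is impossible.\<close>

lemma insert_eq_add_marg: "vi (insert x S) = vi S + marg vi S x"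
  unfolding marg_def by simp

locale binary_submodular_valuation =
  fixes m :: nat and val :: "nat set \<Rightarrow> real"
  assumes binary_submodular: "binary_submodular m val"
begin

lemma val_empty [simp]: "val {} = 0"
  using binary_submodular unfolding binary_submodular_def by blast

lemma marg_01: "S \<subseteq> {..<m} \<Longrightarrow> x < m \<Longrightarrow> marg val S x = 0 \<or> marg val S x = 1"
  using binary_submodular unfolding binary_submodular_def by auto

lemma marg_antimono:
  "S \<subseteq> T \<Longrightarrow> T \<subseteq> {..<m} \<Longrightarrow> x < m \<Longrightarrow> x \<notin> T \<Longrightarrow> marg val T x \<le> marg val S x"
  using binary_submodular unfolding binary_submodular_def by auto

lemma val_le_card:
  assumes "S \<subseteq> {..<m}"
  shows "val S \<le> card S"
proof -
  have "finite S"
    using assms finite_subset by blast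
  then show ?thesis
    using assms
  proof (induction S rule: finite_induct)
    case (insert x S)
    then have "marg val S x \<le> 1"
      using marg_01[of S x] by auto
    with insert show ?case
      by (simp add: insert_eq_add_marg)
  qed simp
qed

lemma val_le_val_union:
  assumes "finite C" "S \<union> C \<subseteq> {..<m}"
  shows "val S \<le> val (S \<union> C)"
  using assms
proof (induction C rule: finite_induct)
  case (insert x C)
  then have "marg val (S \<union> C) x \<ge> 0"
    using marg_01[of "S \<union> C" x] by auto
  with insert show ?case
    by (simp add: insert_eq_add_marg)
qed simp

lemma val_union_marg_zero:
  assumes "finite C" "A \<union> C \<subseteq> {..<m}" "\<forall>y\<in>C. marg val A y = 0"
  shows "val (A \<union> C) = val A"
  using assms
proof (induction C rule: finite_induct)
  case (insert x C)
  show ?case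
  proof (cases "x \<in> A \<union> C")
    case True
    then show ?thesis
      using insert by (simp add: insert_absorb)
  next
    case False
    have "marg val (A \<union> C) x \<le> marg val A x"
      using False insert.prems by (intro marg_antimono) auto
    moreover have "marg val (A \<union> C) x \<ge> 0"
      using marg_01[of "A \<union> C" x] insert.prems by auto
    ultimately have "marg val (A \<union> C) x = 0"
      using insert.prems by simp
    with insert show ?thesis
      by (simp add: insert_eq_add_marg)
  qed
qed simp

lemma clean_bundle_subset:
  assumes "clean_bundle val B" "B \<subseteq> {..<m}" "A \<subseteq> B"
  shows "clean_bundle val A"
  unfolding clean_bundle_def
proof
  fix x assume "x \<in> A"
  then have "marg val (B - {x}) x \<le> marg val (A - {x}) x"
    using assms(2,3) by (intro marg_antimono) auto
  moreover have "marg val (B - {x}) x = 1"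
    using assms(1,3) \<open>x \<in> A\<close> unfolding clean_bundle_def by blast
  ultimately show "marg val (A - {x}) x = 1"
    using marg_01[of "A - {x}" x] assms(2,3) \<open>x \<in> A\<close> by auto
qed

lemma clean_bundle_iff_val_eq_card:
  assumes "B \<subseteq> {..<m}"
  shows "clean_bundle val B \<longleftrightarrow> val B = card B"
proof
  have "finite B"
    using assms finite_subset by blast
  then show "clean_bundle val B \<Longrightarrow> val B = card B"
    using assms
  proof (induction B rule: finite_induct)
    case (insert x B)
    have "insert x B - {x} = B"
      using insert.hyps(2) by blast
    then have "marg val B x = 1"
      using insert.prems(1) unfolding clean_bundle_def by (metis insertI1)
    moreover have "clean_bundle val B"
      using insert.prems by (rule clean_bundle_subset[of "insert x B"]) auto
    ultimately show ?case
      using insert by (simp add: insert_eq_add_marg)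
  qed simp
next
  assume val_B: "val B = card B"
  show "clean_bundle val B"
    unfolding clean_bundle_def
  proof
    fix x assume "x \<in> B"
    have "finite B"
      using assms finite_subset by blast
    have "val B = val (B - {x}) + marg val (B - {x}) x"
      using insert_eq_add_marg[of val x "B - {x}"] \<open>x \<in> B\<close> by (simp add: insert_absorb)
    moreover have "card B = Suc (card (B - {x}))"
      using \<open>finite B\<close> \<open>x \<in> B\<close> by (rule card_Suc_Diff1[symmetric])
    moreover have "val (B - {x}) \<le> card (B - {x})"
      using assms by (intro val_le_card) auto
    ultimately have "marg val (B - {x}) x \<ge> 1"
      using val_B by linarith
    then show "marg val (B - {x}) x = 1"
      using marg_01[of "B - {x}" x] assms \<open>x \<in> B\<close> by auto
  qed
qed

lemma clean_bundle_augment: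
  assumes "clean_bundle val A" "clean_bundle val B" "A \<subseteq> {..<m}" "B \<subseteq> {..<m}"
    and "card A < card B"
  shows "\<exists>y\<in>B - A. clean_bundle val (insert y A)"
proof (rule ccontr)
  assume no_aug: "\<not> ?thesis"
  have val_A: "val A = card A" and val_B: "val B = card B"
    using assms clean_bundle_iff_val_eq_card by blast+
  have "marg val A y = 0" if "y \<in> B - A" for y
  proof -
    have "\<not> clean_bundle val (insert y A)"
      using no_aug that by blast
    then have "val (insert y A) \<noteq> card (insert y A)"
      using clean_bundle_iff_val_eq_card[of "insert y A"] assms(3,4) that by blast
    then have "marg val A y \<noteq> 1"
      using val_A that finite_subset[OF assms(3)] by (auto simp: insert_eq_add_marg)
    then show ?thesis
      using marg_01[of A y] assms(3,4) that by auto
  qed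
  then have "val (A \<union> (B - A)) = val A"
    using assms(3,4) finite_subset[OF assms(4)] by (intro val_union_marg_zero) auto
  moreover have "val B \<le> val (B \<union> A)"
    using assms(3,4) finite_subset[OF assms(3)] by (intro val_le_val_union) auto
  ultimately show False
    using val_A val_B assms(5) by (simp add: Un_commute)
qed

end

definition bundle_sizes :: "(nat \<Rightarrow> nat set) \<Rightarrow> nat \<Rightarrow> int" where
  "bundle_sizes X a = int (card (X a))"

definition move_unit :: "(nat \<Rightarrow> int) \<Rightarrow> nat \<Rightarrow> nat \<Rightarrow> nat \<Rightarrow> int" where
  "move_unit h i k a = h a - of_bool (a = i) + of_bool (a = k)"

lemma move_unit_move_unit: "move_unit (move_unit h j k) i j = move_unit h i k"
  by (simp add: move_unit_def fun_eq_iff)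

lemma sum_move_unit: "i < n \<Longrightarrow> k < n \<Longrightarrow> (\<Sum>a<n. move_unit h i k a) = (\<Sum>a<n. h a)"
  by (simp add: move_unit_def sum.distrib sum_subtractf)

lemma int_card_sum_eq_sum_bundle_sizes: "int (\<Sum>a<n. card (X a)) = (\<Sum>a<n. bundle_sizes X a)"
  by (simp add: bundle_sizes_def)

lemma allocation_bundle_finite: "allocation n m X \<Longrightarrow> a < n \<Longrightarrow> finite (X a)"
  unfolding allocation_def by (meson finite_lessThan finite_subset)

lemma allocation_insert_unowned:
  "allocation n m X \<Longrightarrow> y < m \<Longrightarrow> \<forall>a<n. y \<notin> X a \<Longrightarrow> allocation n m (X(k := insert y (X k)))"
  unfolding allocation_def by auto

lemma allocation_move_item:
  "allocation n m X \<Longrightarrow> j < n \<Longrightarrow> y \<in> X j \<Longrightarrow> allocation n m (X(k := insert y (X k), j := X j - {y}))"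
  unfolding allocation_def by (auto; blast)

lemma bundle_sizes_move_item:
  assumes "finite (X j)" "finite (X k)" "j \<noteq> k" "y \<in> X j" "y \<notin> X k"
  shows "bundle_sizes (X(k := insert y (X k), j := X j - {y})) = move_unit (bundle_sizes X) j k"
proof -
  have "0 < card (X j)"
    using assms(1,4) by (auto simp: card_gt_0_iff)
  then show ?thesis
    using assms by (auto simp: fun_eq_iff bundle_sizes_def move_unit_def of_nat_diff)
qed

lemma card_diff_sum_move_item_less:
  fixes X Y :: "nat \<Rightarrow> 'a set"
  assumes "\<forall>a<n. finite (X a)" "j < n" "y \<in> X j" "y \<notin> Y j" "y \<in> Y k"
  shows "(\<Sum>a<n. card ((X(k := insert y (X k), j := X j - {y})) a - Y a)) < (\<Sum>a<n. card (X a - Y a))"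
proof (rule sum_strict_mono_ex1[OF finite_lessThan])
  show "\<forall>a\<in>{..<n}. card ((X(k := insert y (X k), j := X j - {y})) a - Y a) \<le> card (X a - Y a)"
    using assms(1,5) by (auto intro!: card_mono)
  have "j \<noteq> k"
    using assms(4,5) by blast
  then have "(X(k := insert y (X k), j := X j - {y})) j - Y j = (X j - Y j) - {y}"
    by auto
  moreover have "card ((X j - Y j) - {y}) < card (X j - Y j)"
    using assms by (intro card_Diff1_less) auto
  ultimately have "card ((X(k := insert y (X k), j := X j - {y})) j - Y j) < card (X j - Y j)"
    by simp
  then show "\<exists>a\<in>{..<n}. card ((X(k := insert y (X k), j := X j - {y})) a - Y a) < card (X a - Y a)"
    using assms(2) by blast
qed

definition max_usw_sizes :: "nat \<Rightarrow> nat \<Rightarrow> (nat \<Rightarrow> nat set \<Rightarrow> real) \<Rightarrow> (nat \<Rightarrow> int) set" where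
  "max_usw_sizes n m v = bundle_sizes ` {X. clean_max_usw n m v X}"

definition SS_sizes :: "nat \<Rightarrow> nat \<Rightarrow> (nat \<Rightarrow> nat set \<Rightarrow> real) \<Rightarrow> (nat \<Rightarrow> int) set" where
  "SS_sizes n m v = bundle_sizes ` SS n m v"

lemma SS_sizes_subset: "SS_sizes n m v \<subseteq> max_usw_sizes n m v"
  unfolding SS_sizes_def max_usw_sizes_def SS_def by blast

definition pow_sum :: "real \<Rightarrow> nat list \<Rightarrow> real" where
  "pow_sum c p = (\<Sum>x\<leftarrow>p. c ^ x)"

lemma symmetric_crit_pow_sum: "symmetric_crit n (pow_sum c)"
  unfolding symmetric_crit_def pow_sum_def by (metis mset_map sum_mset_sum_list)

lemma pow_add_pow_less:
  fixes c :: real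
  assumes "2 \<le> c" "a < x" "x < b" "a < y" "y < b"
  shows "c ^ x + c ^ y < c ^ a + c ^ b"
proof -
  obtain b' where b': "b = Suc b'"
    using assms(3) by (cases b) auto
  have "c ^ x \<le> c ^ b'" "c ^ y \<le> c ^ b'"
    using assms b' by (auto intro!: power_increasing)
  moreover have "2 * c ^ b' \<le> c * c ^ b'"
    using assms(1) by (intro mult_right_mono) auto
  moreover have "0 < c ^ a"
    using assms(1) by simp
  ultimately show ?thesis
    using b' by simp
qed

lemma strongly_PD_pow_sum:
  assumes "2 \<le> c"
  shows "strongly_PD n (pow_sum c)"
  unfolding strongly_PD_def
proof (intro allI impI, elim conjE)
  fix p q :: "nat list" and j k
  assume len: "length p = n" "length q = n" and jk: "j < n" "k < n" "p ! j < p ! k"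
    and between: "p ! j < q ! j" "q ! j < p ! k" "p ! j < q ! k" "q ! k < p ! k"
    and others: "\<forall>i<n. i \<noteq> j \<and> i \<noteq> k \<longrightarrow> q ! i = p ! i"
  have "j \<noteq> k"
    using jk(3) by blast
  have split: "pow_sum c r = c ^ (r ! j) + c ^ (r ! k) + (\<Sum>i\<in>{..<n} - {j, k}. c ^ (r ! i))"
    if "length r = n" for r
  proof -
    have "pow_sum c r = (\<Sum>i<n. c ^ (r ! i))"
      unfolding pow_sum_def using that by (simp add: sum_list_sum_nth atLeast0LessThan)
    also have "\<dots> = (\<Sum>i\<in>{..<n} - {j, k}. c ^ (r ! i)) + (\<Sum>i\<in>{j, k}. c ^ (r ! i))"
      using jk(1,2) by (intro sum.subset_diff) auto
    finally show ?thesis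
      using \<open>j \<noteq> k\<close> by simp
  qed
  have "(\<Sum>i\<in>{..<n} - {j, k}. c ^ (q ! i)) = (\<Sum>i\<in>{..<n} - {j, k}. c ^ (p ! i))"
    using others by (intro sum.cong) auto
  moreover have "c ^ (q ! j) + c ^ (q ! k) < c ^ (p ! j) + c ^ (p ! k)"
    using pow_add_pow_less[OF assms between(1,2,3,4)] .
  ultimately show "pow_sum c q < pow_sum c p"
    using split len by simp
qed

lemma profile_nth: "a < n \<Longrightarrow> profile n X ! a = card (X a)"
  unfolding profile_def by simp

lemma length_profile: "length (profile n X) = n"
  unfolding profile_def by simp

lemma profile_move_unit:
  assumes "bundle_sizes W = move_unit (bundle_sizes X) i k" "a < n"
  shows "int (profile n W ! a) = int (profile n X ! a) - of_bool (a = i) + of_bool (a = k)"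
  using assms by (simp add: profile_nth fun_eq_iff bundle_sizes_def move_unit_def)

lemma SS_minimal:
  "X \<in> SS n m v \<Longrightarrow> symmetric_crit n f \<Longrightarrow> strongly_PD n f \<Longrightarrow> clean_max_usw n m v W
    \<Longrightarrow> f (profile n X) \<le> f (profile n W)"
  unfolding SS_def by (auto simp only: mem_Collect_eq)

lemma SS_if_mset_profile_eq:
  assumes "X \<in> SS n m v" "clean_max_usw n m v W" "mset (profile n W) = mset (profile n X)"
  shows "W \<in> SS n m v"
  unfolding SS_def
proof (intro CollectI conjI allI impI)
  fix f \<chi>' assume f: "symmetric_crit n f \<and> strongly_PD n f" and "clean_max_usw n m v \<chi>'"
  have "f (profile n W) = f (profile n X)"
    using f assms(3) unfolding symmetric_crit_def by (simp add: length_profile)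
  also have "\<dots> \<le> f (profile n \<chi>')"
    using SS_minimal assms(1) f \<open>clean_max_usw n m v \<chi>'\<close> by blast
  finally show "f (profile n W) \<le> f (profile n \<chi>')" .
qed (fact assms(2))

lemma SS_sizes_move_unit_le:
  assumes "h \<in> SS_sizes n m v" "i < n" "k < n" "move_unit h i k \<in> max_usw_sizes n m v"
  shows "h i \<le> h k + 1"
proof (rule ccontr)
  assume "\<not> ?thesis"
  obtain X where X: "X \<in> SS n m v" "h = bundle_sizes X"
    using assms(1) unfolding SS_sizes_def by blast
  obtain W where W: "clean_max_usw n m v W" "bundle_sizes W = move_unit h i k"
    using assms(4) unfolding max_usw_sizes_def by (metis imageE mem_Collect_eq)
  let ?p = "profile n X" and ?q = "profile n W"
  have q: "int (?q ! a) = int (?p ! a) - of_bool (a = i) + of_bool (a = k)" if "a < n" for a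
    using profile_move_unit W(2)[unfolded X(2)] that by blast
  have gap: "?p ! k + 2 \<le> ?p ! i"
    using \<open>\<not> h i \<le> h k + 1\<close> X(2) assms(2,3) by (simp add: profile_nth bundle_sizes_def)
  then have "i \<noteq> k"
    by auto
  have "?q ! k = ?p ! k + 1"
    using q[OF assms(3)] \<open>i \<noteq> k\<close> by simp
  moreover have "?q ! i = ?p ! i - 1"
    using q[OF assms(2)] \<open>i \<noteq> k\<close> gap by simp
  moreover have "\<forall>a<n. a \<noteq> k \<and> a \<noteq> i \<longrightarrow> ?q ! a = ?p ! a"
    using q by fastforce
  ultimately have "pow_sum 2 ?q < pow_sum 2 ?p"
    using strongly_PD_pow_sum[OF order_refl, of n, unfolded strongly_PD_def, rule_format, of ?p ?q k i]
      gap assms(2,3) by (simp add: length_profile)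
  moreover have "pow_sum 2 ?p \<le> pow_sum 2 ?q"
    using SS_minimal[OF X(1) symmetric_crit_pow_sum strongly_PD_pow_sum W(1)] by simp
  ultimately show False
    by simp
qed

lemma SS_sizes_move_unit_swap:
  assumes "h \<in> SS_sizes n m v" "i < n" "k < n" "move_unit h i k \<in> max_usw_sizes n m v"
    and "h i = h k + 1"
  shows "move_unit h i k \<in> SS_sizes n m v"
proof -
  obtain X where X: "X \<in> SS n m v" "h = bundle_sizes X"
    using assms(1) unfolding SS_sizes_def by blast
  obtain W where W: "clean_max_usw n m v W" "bundle_sizes W = move_unit h i k"
    using assms(4) unfolding max_usw_sizes_def by (metis imageE mem_Collect_eq)
  let ?p = "profile n X" and ?q = "profile n W"
  have "?q = ?p[k := ?p ! i, i := ?p ! k]"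
  proof (rule nth_equalityI)
    fix a assume "a < length ?q"
    then have "a < n"
      by (simp add: length_profile)
    then have "int (?q ! a) = int (?p[k := ?p ! i, i := ?p ! k] ! a)"
      using profile_move_unit[OF W(2)[unfolded X(2)]] assms(2,3,5) X(2)
      by (auto simp: nth_list_update length_profile profile_nth bundle_sizes_def)
    then show "?q ! a = ?p[k := ?p ! i, i := ?p ! k] ! a"
      by simp
  qed (simp add: length_profile)
  then have "mset ?q = mset ?p"
    using mset_swap[of i ?p k] assms(2,3) by (simp add: length_profile)
  then have "W \<in> SS n m v"
    by (rule SS_if_mset_profile_eq[OF X(1) W(1)])
  then show ?thesis
    using W(2) unfolding SS_sizes_def by (metis image_eqI)
qed

definition l1_dist :: "nat \<Rightarrow> (nat \<Rightarrow> int) \<Rightarrow> (nat \<Rightarrow> int) \<Rightarrow> nat" where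
  "l1_dist n h h' = (\<Sum>a<n. nat \<bar>h a - h' a\<bar>)"

lemma l1_dist_commute: "l1_dist n h h' = l1_dist n h' h"
  unfolding l1_dist_def by (simp add: abs_minus_commute)

lemma l1_dist_move_unit_less:
  assumes "i < n" "h' i < h i" "h k < h' k"
  shows "l1_dist n (move_unit h i k) h' < l1_dist n h h'"
  unfolding l1_dist_def
proof (rule sum_strict_mono_ex1[OF finite_lessThan])
  show "\<forall>a\<in>{..<n}. nat \<bar>move_unit h i k a - h' a\<bar> \<le> nat \<bar>h a - h' a\<bar>"
    using assms by (auto simp: move_unit_def)
  show "\<exists>a\<in>{..<n}. nat \<bar>move_unit h i k a - h' a\<bar> < nat \<bar>h a - h' a\<bar>"
    using assms by (intro bexI[of _ i]) (auto simp: move_unit_def)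
qed

locale binary_submodular_instance =
  fixes n m :: nat and v :: "nat \<Rightarrow> nat set \<Rightarrow> real"
  assumes binary_submodular_agents: "\<forall>i<n. binary_submodular m (v i)"
begin

lemma valuation_of_agent: "i < n \<Longrightarrow> binary_submodular_valuation m (v i)"
  using binary_submodular_agents binary_submodular_valuation.intro by blast

lemma usw_eq_card_sum:
  assumes "allocation n m X" "clean n v X"
  shows "usw n v X = real (\<Sum>a<n. card (X a))"
proof -
  have "v a (X a) = card (X a)" if "a < n" for a
  proof -
    have "X a \<subseteq> {..<m}" "clean_bundle (v a) (X a)"
      using assms that unfolding allocation_def clean_def by auto
    then show ?thesis
      using binary_submodular_valuation.clean_bundle_iff_val_eq_card[OF valuation_of_agent[OF that]] by blast
  qed
  then show ?thesis
    unfolding usw_def by simp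
qed

lemma card_sum_le_if_clean_max_usw:
  assumes "clean_max_usw n m v X" "allocation n m Z" "clean n v Z"
  shows "(\<Sum>a<n. card (Z a)) \<le> (\<Sum>a<n. card (X a))"
proof -
  have "usw n v Z \<le> usw n v X"
    using assms unfolding clean_max_usw_def max_usw_def by blast
  moreover have "usw n v X = real (\<Sum>a<n. card (X a))"
    using assms(1) usw_eq_card_sum unfolding clean_max_usw_def max_usw_def by blast
  ultimately show ?thesis
    using usw_eq_card_sum[OF assms(2,3)] by linarith
qed

lemma clean_max_usw_if_card_sum_ge:
  assumes "clean_max_usw n m v X" "allocation n m Z" "clean n v Z"
    and "(\<Sum>a<n. card (X a)) \<le> (\<Sum>a<n. card (Z a))"
  shows "clean_max_usw n m v Z"
proof -
  have "usw n v X = real (\<Sum>a<n. card (X a))"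
    using assms(1) usw_eq_card_sum unfolding clean_max_usw_def max_usw_def by blast
  then have "usw n v X \<le> usw n v Z"
    using usw_eq_card_sum[OF assms(2,3)] assms(4) by linarith
  show ?thesis
    unfolding clean_max_usw_def max_usw_def
  proof (intro conjI allI impI)
    fix W assume "allocation n m W"
    then have "usw n v W \<le> usw n v X"
      using assms(1) unfolding clean_max_usw_def max_usw_def by blast
    with \<open>usw n v X \<le> usw n v Z\<close> show "usw n v W \<le> usw n v Z"
      by linarith
  qed (use assms(2,3) in auto)
qed

lemma augmenting_item_owned:
  assumes "clean_max_usw n m v X" "k < n" "y < m" "y \<notin> X k"
    and "clean_bundle (v k) (insert y (X k))"
  shows "\<exists>j<n. y \<in> X j"
proof (rule ccontr)
  assume unowned: "\<not> ?thesis"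
  define X' where "X' = X(k := insert y (X k))"
  have X: "allocation n m X" "clean n v X"
    using assms(1) unfolding clean_max_usw_def max_usw_def by auto
  have "allocation n m X'"
    using allocation_insert_unowned[OF X(1) assms(3)] unowned unfolding X'_def by blast
  moreover have "clean n v X'"
    using X(2) assms(5) unfolding X'_def clean_def by auto
  ultimately have "(\<Sum>a<n. card (X' a)) \<le> (\<Sum>a<n. card (X a))"
    by (rule card_sum_le_if_clean_max_usw[OF assms(1)])
  moreover have "(\<Sum>a<n. card (X' a)) = (\<Sum>a<n. card (X a) + of_bool (a = k))"
    using allocation_bundle_finite[OF X(1) assms(2)] assms(4) unfolding X'_def by (intro sum.cong) auto
  ultimately show False
    using assms(2) by (simp add: sum.distrib)
qed

lemma clean_max_usw_move_item:
  assumes "clean_max_usw n m v X" "j < n" "k < n" "j \<noteq> k" "y \<in> X j" "y \<notin> X k"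
    and "clean_bundle (v k) (insert y (X k))"
  shows "clean_max_usw n m v (X(k := insert y (X k), j := X j - {y}))"
    (is "clean_max_usw n m v ?X'")
proof -
  have X: "allocation n m X" "clean n v X"
    using assms(1) unfolding clean_max_usw_def max_usw_def by auto
  have "clean_bundle (v j) (X j - {y})"
    using binary_submodular_valuation.clean_bundle_subset[OF valuation_of_agent[OF assms(2)]] X assms(2)
    unfolding allocation_def clean_def by blast
  then have clean: "clean n v ?X'"
    using X(2) assms(7) unfolding clean_def by auto
  have "bundle_sizes ?X' = move_unit (bundle_sizes X) j k"
    using allocation_bundle_finite[OF X(1)] assms(2-6) by (intro bundle_sizes_move_item) auto
  then have "(\<Sum>a<n. bundle_sizes ?X' a) = (\<Sum>a<n. bundle_sizes X a)"
    using sum_move_unit[OF assms(2,3)] by metis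
  then have card_sum: "(\<Sum>a<n. card (?X' a)) = (\<Sum>a<n. card (X a))"
    by (simp only: int_card_sum_eq_sum_bundle_sizes[symmetric] of_nat_eq_iff)
  show ?thesis
    by (rule clean_max_usw_if_card_sum_ge[OF assms(1) allocation_move_item[OF X(1) assms(2,5)] clean])
      (simp only: card_sum order_refl)
qed

lemma clean_max_usw_transfer_to_deficient:
  assumes "clean_max_usw n m v X" "clean_max_usw n m v Y" "k < n" "card (X k) < card (Y k)"
  obtains j y where "j < n" "j \<noteq> k" "y \<in> X j" "y \<in> Y k" "y \<notin> Y j"
    "clean_max_usw n m v (X(k := insert y (X k), j := X j - {y}))"
    "bundle_sizes (X(k := insert y (X k), j := X j - {y})) = move_unit (bundle_sizes X) j k"
proof -
  have X: "allocation n m X" "clean n v X" and Y: "allocation n m Y" "clean n v Y"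
    using assms(1,2) unfolding clean_max_usw_def max_usw_def by auto
  have bundles: "X k \<subseteq> {..<m}" "Y k \<subseteq> {..<m}" "clean_bundle (v k) (X k)" "clean_bundle (v k) (Y k)"
    using X Y assms(3) unfolding allocation_def clean_def by auto
  obtain y where y: "y \<in> Y k" "y \<notin> X k" "clean_bundle (v k) (insert y (X k))"
    using binary_submodular_valuation.clean_bundle_augment[OF valuation_of_agent[OF assms(3)] bundles(3,4,1,2)]
      assms(4) by blast
  then obtain j where j: "j < n" "y \<in> X j"
    using augmenting_item_owned[OF assms(1,3)] bundles(2) by blast
  have "j \<noteq> k"
    using j y by blast
  have "y \<notin> Y j"
    using Y(1) j(1) assms(3) \<open>j \<noteq> k\<close> y(1) unfolding allocation_def by blast
  moreover have "clean_max_usw n m v (X(k := insert y (X k), j := X j - {y}))"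
    using clean_max_usw_move_item assms(1,3) j \<open>j \<noteq> k\<close> y by blast
  moreover have "bundle_sizes (X(k := insert y (X k), j := X j - {y})) = move_unit (bundle_sizes X) j k"
    using allocation_bundle_finite[OF X(1)] assms(3) j \<open>j \<noteq> k\<close> y by (intro bundle_sizes_move_item) auto
  ultimately show ?thesis
    using that j \<open>j \<noteq> k\<close> y(1) by blast
qed

text \<open>If the agent j who gave up the item does not own more items in X than in Y, then j is the
  new deficient agent, and X has moved closer to Y.\<close>
lemma clean_max_usw_exchange:
  assumes "clean_max_usw n m v X" "clean_max_usw n m v Y" "k < n" "card (X k) < card (Y k)"
  shows "\<exists>i<n. card (Y i) < card (X i) \<and>
    (\<exists>Z. clean_max_usw n m v Z \<and> bundle_sizes Z = move_unit (bundle_sizes X) i k)"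
  using assms(1,3,4)
proof (induction "\<Sum>a<n. card (X a - Y a)" arbitrary: X k rule: less_induct)
  case less
  obtain j y where j: "j < n" "j \<noteq> k" and y: "y \<in> X j" "y \<in> Y k" "y \<notin> Y j"
    and X': "clean_max_usw n m v (X(k := insert y (X k), j := X j - {y}))"
    and sizes_X': "bundle_sizes (X(k := insert y (X k), j := X j - {y})) = move_unit (bundle_sizes X) j k"
    using clean_max_usw_transfer_to_deficient[OF less.prems(1) assms(2) less.prems(2,3)] by blast
  define X' where "X' = X(k := insert y (X k), j := X j - {y})"
  have card_X': "int (card (X' a)) = int (card (X a)) - of_bool (a = j) + of_bool (a = k)" for a
    using sizes_X' unfolding X'_def by (simp add: fun_eq_iff bundle_sizes_def move_unit_def)
  show ?case
  proof (cases "card (Y j) < card (X j)")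
    case True
    then show ?thesis
      using j(1) X' sizes_X' by blast
  next
    case False
    have X_alloc: "allocation n m X"
      using less.prems(1) unfolding clean_max_usw_def max_usw_def by blast
    have "(\<Sum>a<n. card (X' a - Y a)) < (\<Sum>a<n. card (X a - Y a))"
      unfolding X'_def using allocation_bundle_finite[OF X_alloc] j y
      by (intro card_diff_sum_move_item_less) auto
    moreover have "card (X' j) < card (Y j)"
      using card_X'[of j] j(2) False by simp
    ultimately obtain i Z where i: "i < n" "card (Y i) < card (X' i)"
      and Z: "clean_max_usw n m v Z" "bundle_sizes Z = move_unit (bundle_sizes X') i j"
      using less.hyps X' j(1) unfolding X'_def by blast
    have "i \<noteq> j" "i \<noteq> k"
      using i(2) \<open>card (X' j) < card (Y j)\<close> card_X'[of k] j(2) less.prems(3) by auto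
    then have "card (Y i) < card (X i)"
      using i(2) card_X'[of i] by simp
    moreover have "bundle_sizes Z = move_unit (bundle_sizes X) i k"
      using Z(2) sizes_X' unfolding X'_def by (simp add: move_unit_move_unit)
    ultimately show ?thesis
      using i(1) Z(1) by blast
  qed
qed

lemma max_usw_sizes_exchange:
  assumes "h \<in> max_usw_sizes n m v" "h' \<in> max_usw_sizes n m v" "k < n" "h k < h' k"
  shows "\<exists>i<n. h' i < h i \<and> move_unit h i k \<in> max_usw_sizes n m v"
proof -
  obtain X Y where XY: "clean_max_usw n m v X" "clean_max_usw n m v Y"
    and sizes: "h = bundle_sizes X" "h' = bundle_sizes Y"
    using assms(1,2) unfolding max_usw_sizes_def by blast
  then have "card (X k) < card (Y k)"
    using assms(4) by (simp add: bundle_sizes_def)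
  then obtain i Z where "i < n" "card (Y i) < card (X i)"
    and Z: "clean_max_usw n m v Z" "bundle_sizes Z = move_unit h i k"
    using clean_max_usw_exchange[OF XY assms(3)] sizes(1) by blast
  moreover have "move_unit h i k \<in> max_usw_sizes n m v"
    unfolding max_usw_sizes_def using Z by (metis image_eqI mem_Collect_eq)
  ultimately show ?thesis
    using sizes by (auto simp: bundle_sizes_def)
qed

text \<open>Exchanges from h towards h' at j and back either are swaps, giving a closer pair violating
  the claim at i, or lead to an agent b below j.\<close>
lemma SS_sizes_gap_descent:
  assumes h: "h \<in> SS_sizes n m v" and h': "h' \<in> SS_sizes n m v" and gap: "h' i + 2 \<le> h i"
    and j: "j < n" "h j < h' j" "h j + 2 \<le> h i"
  obtains b where "b < n" "h b < h' b" "h b < h j"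
  | g g' where "g \<in> SS_sizes n m v" "g' \<in> SS_sizes n m v" "g' i + 2 \<le> g i"
      "l1_dist n g g' < l1_dist n h h'"
proof -
  have h_max: "h \<in> max_usw_sizes n m v" and h'_max: "h' \<in> max_usw_sizes n m v"
    using h h' SS_sizes_subset by blast+
  obtain a where a: "a < n" "h' a < h a" "move_unit h a j \<in> max_usw_sizes n m v"
    using max_usw_sizes_exchange[OF h_max h'_max j(1,2)] by blast
  show ?thesis
  proof (cases "h a \<le> h j")
    case False
    then have "h a = h j + 1"
      using SS_sizes_move_unit_le[OF h a(1) j(1) a(3)] by simp
    then have "move_unit h a j \<in> SS_sizes n m v" "move_unit h a j i = h i"
      using SS_sizes_move_unit_swap[OF h a(1) j(1) a(3)] j(3) by (auto simp: move_unit_def)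
    moreover have "l1_dist n (move_unit h a j) h' < l1_dist n h h'"
      using l1_dist_move_unit_less a(1,2) j(2) by blast
    ultimately show ?thesis
      using that(2) h' gap by simp
  next
    case True
    obtain b where b: "b < n" "h b < h' b" "move_unit h' b a \<in> max_usw_sizes n m v"
      using max_usw_sizes_exchange[OF h'_max h_max a(1,2)] by blast
    show ?thesis
    proof (cases "h' b \<le> h' a")
      case True
      then show ?thesis
        using that(1) a(2) b(1,2) \<open>h a \<le> h j\<close> by fastforce
    next
      case False
      then have "h' b = h' a + 1"
        using SS_sizes_move_unit_le[OF h' b(1) a(1) b(3)] by simp
      then have "move_unit h' b a \<in> SS_sizes n m v" "move_unit h' b a i = h' i"
        using SS_sizes_move_unit_swap[OF h' b(1) a(1) b(3)] b(2) a(2) gap \<open>h a \<le> h j\<close> j(3)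
        by (auto simp: move_unit_def)
      moreover have "l1_dist n h (move_unit h' b a) < l1_dist n h h'"
        using l1_dist_move_unit_less[of b n h h' a] b(1,2) a(2) l1_dist_commute by metis
      ultimately show ?thesis
        using that(2) h gap by simp
    qed
  qed
qed

text \<open>For a violating pair of minimal distance, an exchange from h' towards h at i gives an agent j
  with h j < h' j and h j + 2 \<le> h i; one with minimal h j contradicts the descent.\<close>
lemma SS_sizes_le_add_one:
  assumes "h \<in> SS_sizes n m v" "h' \<in> SS_sizes n m v" "i < n"
  shows "h i \<le> h' i + 1"
  using assms(1,2)
proof (induction "l1_dist n h h'" arbitrary: h h' rule: less_induct)
  case less
  show ?case
  proof (rule ccontr)
    assume "\<not> ?case"
    then have gap: "h' i + 2 \<le> h i"
      by simp
    define J where "J = {j. j < n \<and> h j < h' j \<and> h j + 2 \<le> h i}"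
    have "J \<noteq> {}"
    proof -
      have h_max: "h \<in> max_usw_sizes n m v" and h'_max: "h' \<in> max_usw_sizes n m v"
        using less.prems SS_sizes_subset by blast+
      obtain j where j: "j < n" "h j < h' j" "move_unit h' j i \<in> max_usw_sizes n m v"
        using max_usw_sizes_exchange[OF h'_max h_max assms(3)] gap by auto
      then have "h' j \<le> h' i + 1"
        using SS_sizes_move_unit_le[OF less.prems(2) _ assms(3)] by blast
      then have "j \<in> J"
        using j gap unfolding J_def by auto
      then show ?thesis
        by blast
    qed
    moreover have "finite J"
      unfolding J_def by simp
    ultimately obtain j where "j \<in> J" and j_min: "\<not> (\<exists>j'\<in>J. h j' < h j)"
      using arg_min_if_finite by metis
    then have j: "j < n" "h j < h' j" "h j + 2 \<le> h i"
      unfolding J_def by auto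
    show False
    proof (rule SS_sizes_gap_descent[OF less.prems gap j])
      fix b assume "b < n" "h b < h' b" "h b < h j"
      then have "b \<in> J"
        using j(3) unfolding J_def by auto
      with j_min \<open>h b < h j\<close> show False
        by blast
    next
      fix g g' assume "g \<in> SS_sizes n m v" "g' \<in> SS_sizes n m v" "g' i + 2 \<le> g i"
        and "l1_dist n g g' < l1_dist n h h'"
      then show False
        using less.hyps by fastforce
    qed
  qed
qed

end

theorem theorem5:
  fixes n m :: nat and v :: "nat \<Rightarrow> nat set \<Rightarrow> real" and \<chi> \<chi>' :: "nat \<Rightarrow> nat set"
  assumes "\<forall>i<n. binary_submodular m (v i)"
    and "\<chi> \<in> SS n m v" and "\<chi>' \<in> SS n m v"
  shows "\<forall>i<n. \<bar>int (card (\<chi> i)) - int (card (\<chi>' i))\<bar> \<le> 1"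
proof (intro allI impI)
  fix i assume "i < n"
  interpret binary_submodular_instance n m v
    by unfold_locales (fact assms(1))
  have sizes: "bundle_sizes \<chi> \<in> SS_sizes n m v" "bundle_sizes \<chi>' \<in> SS_sizes n m v"
    using assms(2,3) unfolding SS_sizes_def by blast+
  show "\<bar>int (card (\<chi> i)) - int (card (\<chi>' i))\<bar> \<le> 1"
    using SS_sizes_le_add_one[OF sizes \<open>i < n\<close>] SS_sizes_le_add_one[OF sizes(2,1) \<open>i < n\<close>]
    by (simp add: bundle_sizes_def abs_le_iff)
qed

end
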